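(* A filter $D$ on $\omega$ is not nowhere dense if and only if there is a function $f\colon\omega\to{}^{\omega>}2$ such that for every $B\in D$ the set $f(B)$ is somewhere dense.
   Context: ${}^{\omega>}2$ is the set of finite $0$-$1$ sequences; for $\eta,\nu\in{}^{\omega>}2$, $\eta^\frown\nu$ is their concatenation and $\eta\unlhd\varrho$ means $\varrho$ extends $\eta$. A set $X\subseteq{}^{\omega>}2$ is somewhere dense if there is $\eta\in{}^{\omega>}2$ such that for every $\nu\in{}^{\omega>}2$ there is $\varrho\in X$ with $\eta^\frown\nu\unlhd\varrho$. A filter $D$ on $\omega$ is nowhere dense if for every function $f\colon\omega\to{}^\omega 2$ there is $A\in D$ such that $f(A)$ is nowhere dense in the Cantor set ${}^\omega 2$. *)

theory Defs
  imports "HOL-Analysis.Analysis" "HOL-Library.Sublist"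
begin

text \<open>Finite 0-1 sequences are represented as bool lists; the Cantor set as nat \<Rightarrow> bool
  with the product of discrete topologies on {False, True}.\<close>

definition cantor_top :: "(nat \<Rightarrow> bool) topology" where
  "cantor_top = product_topology (\<lambda>_. discrete_topology (UNIV :: bool set)) UNIV"

definition nowhere_dense_cantor :: "(nat \<Rightarrow> bool) set \<Rightarrow> bool" where
  "nowhere_dense_cantor S \<longleftrightarrow> cantor_top interior_of (cantor_top closure_of S) = {}"

definition somewhere_dense_seq :: "bool list set \<Rightarrow> bool" where
  "somewhere_dense_seq X \<longleftrightarrow> (\<exists>\<eta>. \<forall>\<nu>. \<exists>\<rho>\<in>X. prefix (\<eta> @ \<nu>) \<rho>)"

definition nowhere_dense_filter :: "nat filter \<Rightarrow> bool" where
  "nowhere_dense_filter D \<longleftrightarrow>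
     (\<forall>f :: nat \<Rightarrow> (nat \<Rightarrow> bool). \<exists>A. eventually (\<lambda>n. n \<in> A) D \<and> nowhere_dense_cantor (f ` A))"

end

theory Submission
  imports Defs
begin

text \<open>The cylinders of finite 0-1 sequences form a base of the Cantor space, so a set \<open>S\<close> is
  somewhere dense there iff some cylinder \<open>[\<eta>]\<close> has all its subcylinders \<open>[\<eta> @ \<nu>]\<close> meeting
  \<open>S\<close>. Given \<open>f\<close> into finite sequences, padding each \<open>f n\<close> with zeros turns density of
  \<open>f ` B\<close> into density of its image in the Cantor space. Conversely, given \<open>g\<close> into the Cantor
  space, take \<open>f n\<close> to be the first \<open>n\<close> bits of \<open>g n\<close>; to see that \<open>\<eta> @ \<nu>\<close> is a prefix of
  some \<open>f n\<close> with \<open>n \<in> B\<close>, extend \<open>\<eta> @ \<nu>\<close> (of length \<open>m\<close>) by \<open>m\<close> bits diagonalising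
  against \<open>g 0, \<dots>, g (m - 1)\<close>: any \<open>g n\<close>, \<open>n \<in> B\<close>, in the resulting cylinder has \<open>n \<ge> m\<close>.\<close>

definition cylinder :: "bool list \<Rightarrow> (nat \<Rightarrow> bool) set" where
  "cylinder w = {x. \<forall>i<length w. x i = w ! i}"

definition seq_take :: "(nat \<Rightarrow> bool) \<Rightarrow> nat \<Rightarrow> bool list" where
  "seq_take x n = map x [0..<n]"

definition zero_extend :: "bool list \<Rightarrow> nat \<Rightarrow> bool" where
  "zero_extend w i = (i < length w \<and> w ! i)"

lemma topspace_cantor_top [simp]: "topspace cantor_top = UNIV"
  by (simp add: cantor_top_def)

lemma length_seq_take [simp]: "length (seq_take x n) = n"
  by (simp add: seq_take_def)

lemma in_cylinder_seq_take: "x \<in> cylinder (seq_take x n)"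
  by (simp add: cylinder_def seq_take_def)

lemma cylinder_antimono: "prefix w v \<Longrightarrow> cylinder v \<subseteq> cylinder w"
  by (auto simp: cylinder_def prefix_def nth_append)

lemma zero_extend_in_cylinder: "prefix w v \<Longrightarrow> zero_extend v \<in> cylinder w"
  by (auto simp: cylinder_def zero_extend_def prefix_def nth_append)

lemma prefix_seq_take_iff: "prefix w (seq_take y n) \<longleftrightarrow> length w \<le> n \<and> y \<in> cylinder w"
proof
  assume "prefix w (seq_take y n)"
  then obtain zs where zs: "seq_take y n = w @ zs"
    by (auto simp: prefix_def)
  then have "length w \<le> n"
    by (metis le_add1 length_append length_seq_take)
  moreover have "y i = w ! i" if "i < length w" for i
    using arg_cong[OF zs, of "\<lambda>v. v ! i"] that \<open>length w \<le> n\<close>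
    by (simp add: nth_append seq_take_def)
  ultimately show "length w \<le> n \<and> y \<in> cylinder w"
    by (simp add: cylinder_def)
next
  assume "length w \<le> n \<and> y \<in> cylinder w"
  then have "take (length w) (seq_take y n) = w"
    by (intro nth_equalityI) (auto simp: seq_take_def cylinder_def)
  then show "prefix w (seq_take y n)"
    by (metis append_take_drop_id prefixI)
qed

lemma openin_cylinder: "openin cantor_top (cylinder w)"
  unfolding cantor_top_def openin_product_topology_alt
proof
  fix x assume "x \<in> cylinder w"
  let ?U = "\<lambda>i. if i < length w then {w ! i} else UNIV"
  have "finite {i. ?U i \<noteq> UNIV}"
    by (rule finite_subset[of _ "{..<length w}"]) auto
  moreover have "cylinder w = Pi\<^sub>E UNIV ?U"
    by (auto simp: cylinder_def PiE_iff split: if_splits)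
  ultimately show "\<exists>U. finite {i \<in> UNIV. U i \<noteq> topspace (discrete_topology UNIV)} \<and>
      (\<forall>i\<in>UNIV. openin (discrete_topology UNIV) (U i)) \<and> x \<in> Pi\<^sub>E UNIV U \<and> Pi\<^sub>E UNIV U \<subseteq> cylinder w"
    using \<open>x \<in> cylinder w\<close> by (intro exI[of _ ?U]) auto
qed

lemma openin_cantor_top_contains_cylinder:
  assumes "openin cantor_top T" "x \<in> T"
  obtains n where "cylinder (seq_take x n) \<subseteq> T"
proof -
  obtain U where U: "finite {i \<in> UNIV. U i \<noteq> topspace (discrete_topology (UNIV :: bool set))}"
      "x \<in> Pi\<^sub>E UNIV U" "Pi\<^sub>E UNIV U \<subseteq> T"
    using assms unfolding cantor_top_def openin_product_topology_alt by blast
  have "finite {i. U i \<noteq> UNIV}"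
    using U(1) by simp
  then obtain n where n: "{i. U i \<noteq> UNIV} \<subseteq> {..<n}"
    using finite_nat_bounded by blast
  have "cylinder (seq_take x n) \<subseteq> Pi\<^sub>E UNIV U"
  proof
    fix y assume y: "y \<in> cylinder (seq_take x n)"
    have "y i \<in> U i" for i
    proof (cases "i < n")
      case True
      then have "y i = x i"
        using y by (simp add: cylinder_def seq_take_def)
      then show ?thesis
        using U(2) by (simp add: PiE_iff)
    next
      case False
      then show ?thesis
        using n by auto
    qed
    then show "y \<in> Pi\<^sub>E UNIV U"
      by (simp add: PiE_iff)
  qed
  then show thesis
    using that U(3) by (meson order_trans)
qed

lemma in_closure_of_cantor_top_iff:
  "x \<in> cantor_top closure_of S \<longleftrightarrow> (\<forall>n. cylinder (seq_take x n) \<inter> S \<noteq> {})"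
proof
  assume "x \<in> cantor_top closure_of S"
  then have "\<exists>y. y \<in> S \<and> y \<in> cylinder (seq_take x n)" for n
    using openin_cylinder in_cylinder_seq_take unfolding in_closure_of by blast
  then show "\<forall>n. cylinder (seq_take x n) \<inter> S \<noteq> {}"
    by blast
next
  assume cyl: "\<forall>n. cylinder (seq_take x n) \<inter> S \<noteq> {}"
  have "\<exists>y. y \<in> S \<and> y \<in> T" if "x \<in> T" "openin cantor_top T" for T
  proof -
    obtain n where "cylinder (seq_take x n) \<subseteq> T"
      using openin_cantor_top_contains_cylinder \<open>openin cantor_top T\<close> \<open>x \<in> T\<close> .
    with cyl show ?thesis
      by blast
  qed
  then show "x \<in> cantor_top closure_of S"
    by (simp add: in_closure_of)
qed

lemma somewhere_dense_cantor_iff: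
  "\<not> nowhere_dense_cantor S \<longleftrightarrow> (\<exists>\<eta>. \<forall>\<nu>. cylinder (\<eta> @ \<nu>) \<inter> S \<noteq> {})"
proof
  assume "\<not> nowhere_dense_cantor S"
  then obtain x T where T: "openin cantor_top T" "x \<in> T" "T \<subseteq> cantor_top closure_of S"
    unfolding nowhere_dense_cantor_def interior_of_def by blast
  obtain n where n: "cylinder (seq_take x n) \<subseteq> T"
    using openin_cantor_top_contains_cylinder T(1,2) .
  have "cylinder (seq_take x n @ \<nu>) \<inter> S \<noteq> {}" for \<nu>
  proof -
    let ?w = "seq_take x n @ \<nu>"
    have "zero_extend ?w \<in> cantor_top closure_of S"
      using n T(3) cylinder_antimono[of "seq_take x n" ?w] zero_extend_in_cylinder[of ?w ?w] by auto
    then show ?thesis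
      using openin_cylinder zero_extend_in_cylinder[of ?w ?w] by (auto simp: in_closure_of)
  qed
  then show "\<exists>\<eta>. \<forall>\<nu>. cylinder (\<eta> @ \<nu>) \<inter> S \<noteq> {}"
    by blast
next
  assume "\<exists>\<eta>. \<forall>\<nu>. cylinder (\<eta> @ \<nu>) \<inter> S \<noteq> {}"
  then obtain \<eta> where \<eta>: "\<And>\<nu>. cylinder (\<eta> @ \<nu>) \<inter> S \<noteq> {}"
    by blast
  have "cylinder \<eta> \<subseteq> cantor_top closure_of S"
  proof
    fix x assume x: "x \<in> cylinder \<eta>"
    have "cylinder (seq_take x n) \<inter> S \<noteq> {}" for n
    proof -
      have "prefix \<eta> (seq_take x (max n (length \<eta>)))"
        using x by (simp add: prefix_seq_take_iff)
      then obtain \<nu> where "seq_take x (max n (length \<eta>)) = \<eta> @ \<nu>"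
        by (auto simp: prefix_def)
      moreover have "prefix (seq_take x n) (seq_take x (max n (length \<eta>)))"
        by (simp add: prefix_seq_take_iff in_cylinder_seq_take)
      ultimately show ?thesis
        using \<eta>[of \<nu>] cylinder_antimono by fastforce
    qed
    then show "x \<in> cantor_top closure_of S"
      by (simp add: in_closure_of_cantor_top_iff)
  qed
  then have "cylinder \<eta> \<subseteq> cantor_top interior_of (cantor_top closure_of S)"
    by (simp add: interior_of_maximal openin_cylinder)
  then show "\<not> nowhere_dense_cantor S"
    using zero_extend_in_cylinder[of \<eta> \<eta>] by (auto simp: nowhere_dense_cantor_def)
qed

lemma cylinder_avoiding_initial_segment:
  fixes g :: "nat \<Rightarrow> nat \<Rightarrow> bool"
  shows "\<exists>\<nu>. \<forall>n. g n \<in> cylinder (e @ \<nu>) \<longrightarrow> length e \<le> n"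
proof (intro exI allI impI)
  let ?m = "length e"
  let ?\<nu> = "map (\<lambda>n. \<not> g n (?m + n)) [0..<?m]"
  fix n assume n: "g n \<in> cylinder (e @ ?\<nu>)"
  show "?m \<le> n"
  proof (rule ccontr)
    assume "\<not> ?m \<le> n"
    then have "?m + n < length (e @ ?\<nu>)"
      by simp
    then have "g n (?m + n) = (e @ ?\<nu>) ! (?m + n)"
      using n unfolding cylinder_def by blast
    also have "\<dots> = (\<not> g n (?m + n))"
      using \<open>\<not> ?m \<le> n\<close> by (simp add: nth_append)
    finally show False
      by simp
  qed
qed

lemma somewhere_dense_zero_extend:
  assumes "somewhere_dense_seq (f ` B)"
  shows "\<not> nowhere_dense_cantor ((\<lambda>n. zero_extend (f n)) ` B)"
proof -
  obtain \<eta> where \<eta>: "\<And>\<nu>. \<exists>\<rho>\<in>f ` B. prefix (\<eta> @ \<nu>) \<rho>"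
    using assms unfolding somewhere_dense_seq_def by blast
  have "cylinder (\<eta> @ \<nu>) \<inter> (\<lambda>n. zero_extend (f n)) ` B \<noteq> {}" for \<nu>
    using \<eta>[of \<nu>] zero_extend_in_cylinder by blast
  then show ?thesis
    unfolding somewhere_dense_cantor_iff by blast
qed

lemma somewhere_dense_seq_take_diagonal:
  assumes "\<not> nowhere_dense_cantor (g ` B)"
  shows "somewhere_dense_seq ((\<lambda>n. seq_take (g n) n) ` B)"
  unfolding somewhere_dense_seq_def
proof -
  obtain \<eta> where \<eta>: "\<And>\<nu>. cylinder (\<eta> @ \<nu>) \<inter> g ` B \<noteq> {}"
    using assms unfolding somewhere_dense_cantor_iff by blast
  have "\<exists>\<rho>\<in>(\<lambda>n. seq_take (g n) n) ` B. prefix (\<eta> @ \<nu>) \<rho>" for \<nu>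
  proof -
    obtain \<mu> where \<mu>: "\<And>n. g n \<in> cylinder (\<eta> @ \<nu> @ \<mu>) \<Longrightarrow> length (\<eta> @ \<nu>) \<le> n"
      using cylinder_avoiding_initial_segment[of g "\<eta> @ \<nu>"] by auto
    obtain n where n: "n \<in> B" "g n \<in> cylinder (\<eta> @ \<nu> @ \<mu>)"
      using \<eta>[of "\<nu> @ \<mu>"] by blast
    then have "prefix (\<eta> @ \<nu>) (seq_take (g n) n)"
      using \<mu> cylinder_antimono[of "\<eta> @ \<nu>" "\<eta> @ \<nu> @ \<mu>"] by (auto simp: prefix_seq_take_iff)
    with n(1) show ?thesis
      by blast
  qed
  then show "\<exists>\<eta>. \<forall>\<nu>. \<exists>\<rho>\<in>(\<lambda>n. seq_take (g n) n) ` B. prefix (\<eta> @ \<nu>) \<rho>"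
    by blast
qed

theorem mainTheorem3:
  fixes D :: "nat filter"
  shows "\<not> nowhere_dense_filter D \<longleftrightarrow>
    (\<exists>f :: nat \<Rightarrow> bool list. \<forall>B. eventually (\<lambda>n. n \<in> B) D \<longrightarrow> somewhere_dense_seq (f ` B))"
proof
  assume "\<not> nowhere_dense_filter D"
  then obtain g :: "nat \<Rightarrow> nat \<Rightarrow> bool"
    where g: "\<And>B. eventually (\<lambda>n. n \<in> B) D \<Longrightarrow> \<not> nowhere_dense_cantor (g ` B)"
    unfolding nowhere_dense_filter_def by blast
  show "\<exists>f :: nat \<Rightarrow> bool list. \<forall>B. eventually (\<lambda>n. n \<in> B) D \<longrightarrow> somewhere_dense_seq (f ` B)"
    by (intro exI[of _ "\<lambda>n. seq_take (g n) n"] allI impI somewhere_dense_seq_take_diagonal g)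
next
  assume "\<exists>f :: nat \<Rightarrow> bool list. \<forall>B. eventually (\<lambda>n. n \<in> B) D \<longrightarrow> somewhere_dense_seq (f ` B)"
  then obtain f :: "nat \<Rightarrow> bool list"
    where f: "\<And>B. eventually (\<lambda>n. n \<in> B) D \<Longrightarrow> somewhere_dense_seq (f ` B)"
    by blast
  show "\<not> nowhere_dense_filter D"
  proof
    assume "nowhere_dense_filter D"
    then obtain A where A: "eventually (\<lambda>n. n \<in> A) D"
        "nowhere_dense_cantor ((\<lambda>n. zero_extend (f n)) ` A)"
      unfolding nowhere_dense_filter_def by (blast dest: spec[of _ "\<lambda>n. zero_extend (f n)"])
    with somewhere_dense_zero_extend[OF f] show False
      by blast
  qed
qed

end
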